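(* Assume (H1'). Then for any $T>0$, any $q\in\mathbb R^d$ and any $A>0$ there exists $R>0$ such that \[\lim_{\delta\to0}\limsup_{n\to\infty}\sup_{z\in E:|nq-z|<\delta n}\frac1n\log\mathbb P_z\bigl(\tau_{nR}\le Tn\bigr)\ \le\ -A.\]
   Context: Let $E\subset\mathbb R^d$ be unbounded and $(Z(t))_{t\ge0}$ a continuous-time strong Markov process on $E$ with right-continuous paths having left limits; $\mathbb P_z$ denotes probability given $Z(0)=z$; $Z^\varepsilon(t)=\varepsilon Z(t/\varepsilon)$. For $R>0$, $\tau_R=\inf\{t\ge0:|Z(t)|\ge R\}$. (H1'): for every $T>0$ the family $(Z^\varepsilon(t),t\in[0,T])$ satisfies a sample path large deviation principle in the Skorohod space $D([0,T],\mathbb R^d)$ with a good rate function $I_{[0,T]}$ (good: for every $c\ge0$ and compact $V$, $\{\phi:\phi(0)\in V,I_{[0,T]}(\phi)\le c\}$ is compact), with lower bound $\lim_{\delta\to0}\liminf_{\varepsilon\to0}\inf_{z'\in E:|\varepsilon z'-z|<\delta}\varepsilon\log\mathbb P_{z'}(Z^\varepsilon(\cdot)\in\mathcal O)\ge-\inf_{\phi\in\mathcal O,\phi(0)=z}I_{[0,T]}(\phi)$ for open $\mathcal O$, and upper bound $\lim_{\delta\to0}\limsup_{\varepsilon\to0}\sup_{z'\in E:|\varepsilon z'-z|<\delta}\varepsilon\log\mathbb P_{z'}(Z^\varepsilon(\cdot)\in F)\le-\inf_{\phi\in F,\phi(0)=z}I_{[0,T]}(\phi)$ for closed $F$; and $I_T(q,q')=\inf\{I_{[0,T]}(\phi):\phi(0)=q,\phi(T)=q'\}$.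 *)

theory Defs
  imports "HOL-Probability.Probability"
begin

(* Paths on [0,T] are normalised by clamping the time argument to [0,T]. *)
definition clamp :: "real \<Rightarrow> (real \<Rightarrow> 'a) \<Rightarrow> real \<Rightarrow> 'a" where
  "clamp T \<phi> = (\<lambda>t. \<phi> (max 0 (min T t)))"

definition cadlag_on :: "real \<Rightarrow> (real \<Rightarrow> 'a::real_normed_vector) \<Rightarrow> bool" where
  "cadlag_on T \<phi> \<longleftrightarrow>
     (\<forall>t\<in>{0..<T}. continuous (at_right t) \<phi>) \<and>
     (\<forall>t\<in>{0<..T}. \<exists>l. (\<phi> \<longlongrightarrow> l) (at_left t))"

definition Dsp :: "real \<Rightarrow> (real \<Rightarrow> 'a::real_normed_vector) set" where
  "Dsp T = {\<phi>. clamp T \<phi> = \<phi> \<and> cadlag_on T \<phi>}"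

definition time_changes :: "real \<Rightarrow> (real \<Rightarrow> real) set" where
  "time_changes T = {r. strict_mono_on {0..T} r \<and> continuous_on {0..T} r \<and> r 0 = 0 \<and> r T = T}"

definition sk_dist :: "real \<Rightarrow> (real \<Rightarrow> 'a::real_normed_vector) \<Rightarrow> (real \<Rightarrow> 'a) \<Rightarrow> real" where
  "sk_dist T \<phi> \<psi> = Inf ((\<lambda>r. max (Sup ((\<lambda>t. \<bar>r t - t\<bar>) ` {0..T}))
                                    (Sup ((\<lambda>t. norm (\<phi> t - \<psi> (r t))) ` {0..T})))
                          ` time_changes T)"

definition sk_open :: "real \<Rightarrow> (real \<Rightarrow> 'a::real_normed_vector) set \<Rightarrow> bool" where
  "sk_open T U \<longleftrightarrow> U \<subseteq> Dsp T \<and>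
     (\<forall>\<phi>\<in>U. \<exists>e>0. \<forall>\<psi>\<in>Dsp T. sk_dist T \<phi> \<psi> < e \<longrightarrow> \<psi> \<in> U)"

lemma istopology_sk_open: "istopology (sk_open T)"
  unfolding istopology_def
proof (intro conjI allI impI)
  fix S1 S2 :: "(real \<Rightarrow> 'a::real_normed_vector) set"
  assume h1: "sk_open T S1" and h2: "sk_open T S2"
  note h = conjI[OF h1 h2]
  show "sk_open T (S1 \<inter> S2)"
    unfolding sk_open_def
  proof (intro conjI ballI)
    show "S1 \<inter> S2 \<subseteq> Dsp T" using h by (auto simp: sk_open_def)
  next
    fix \<phi> assume "\<phi> \<in> S1 \<inter> S2"
    then obtain e1 e2 where "e1 > 0" "e2 > 0"
      "\<forall>\<psi>\<in>Dsp T. sk_dist T \<phi> \<psi> < e1 \<longrightarrow> \<psi> \<in> S1"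
      "\<forall>\<psi>\<in>Dsp T. sk_dist T \<phi> \<psi> < e2 \<longrightarrow> \<psi> \<in> S2"
      using h unfolding sk_open_def by blast
    then show "\<exists>e>0. \<forall>\<psi>\<in>Dsp T. sk_dist T \<phi> \<psi> < e \<longrightarrow> \<psi> \<in> S1 \<inter> S2"
      by (intro exI[of _ "min e1 e2"]) auto
  qed
next
  fix K :: "(real \<Rightarrow> 'a::real_normed_vector) set set"
  assume "\<forall>S\<in>K. sk_open T S"
  then show "sk_open T (\<Union>K)"
    unfolding sk_open_def by (metis UnionE UnionI Union_least)
qed

definition skorohod_topology :: "real \<Rightarrow> (real \<Rightarrow> 'a::real_normed_vector) topology" where
  "skorohod_topology T = topology (sk_open T)"

definition borel_of_top :: "'a topology \<Rightarrow> 'a measure" where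
  "borel_of_top X = sigma (topspace X) {U. openin X U}"

definition elog :: "real \<Rightarrow> ereal" where
  "elog p = (if p \<le> 0 then -\<infinity> else ereal (ln p))"

definition rescaled_path ::
  "(real \<Rightarrow> 'w \<Rightarrow> 'a::real_normed_vector) \<Rightarrow> real \<Rightarrow> real \<Rightarrow> 'w \<Rightarrow> real \<Rightarrow> 'a" where
  "rescaled_path Z \<epsilon> T \<omega> = clamp T (\<lambda>t. \<epsilon> *\<^sub>R Z (t / \<epsilon>) \<omega>)"

definition exit_time :: "(real \<Rightarrow> 'w \<Rightarrow> 'a::real_normed_vector) \<Rightarrow> real \<Rightarrow> 'w \<Rightarrow> ereal" where
  "exit_time Z R \<omega> = Inf {ereal t | t. t \<ge> 0 \<and> norm (Z t \<omega>) \<ge> R}"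

definition good_rate_function :: "real \<Rightarrow> ((real \<Rightarrow> 'a::real_normed_vector) \<Rightarrow> ereal) \<Rightarrow> bool" where
  "good_rate_function T I \<longleftrightarrow>
     (\<forall>\<phi>\<in>Dsp T. I \<phi> \<ge> 0) \<and>
     (\<forall>c::real. closedin (skorohod_topology T) {\<phi>\<in>Dsp T. I \<phi> \<le> ereal c}) \<and>
     (\<forall>c::real. \<forall>V. c \<ge> 0 \<longrightarrow> compact V \<longrightarrow>
        compactin (skorohod_topology T) {\<phi>\<in>Dsp T. \<phi> 0 \<in> V \<and> I \<phi> \<le> ereal c})"

(* hypothesis (H1'): uniform sample path LDP for Z^\<epsilon> on every [0,T] *)
definition H1' ::
  "'a::real_normed_vector set \<Rightarrow> ('a \<Rightarrow> 'w measure) \<Rightarrow> (real \<Rightarrow> 'w \<Rightarrow> 'a)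
    \<Rightarrow> (real \<Rightarrow> (real \<Rightarrow> 'a) \<Rightarrow> ereal) \<Rightarrow> bool" where
  "H1' E P Z I \<longleftrightarrow> (\<forall>T>0.
     good_rate_function T (I T) \<and>
     (\<forall>U z. openin (skorohod_topology T) U \<longrightarrow>
        Lim (at_right (0::real)) (\<lambda>\<delta>. Liminf (at_right (0::real)) (\<lambda>\<epsilon>.
          INF z'\<in>{z'\<in>E. norm (\<epsilon> *\<^sub>R z' - z) < \<delta>}.
            ereal \<epsilon> * elog (measure (P z') {\<omega>\<in>space (P z'). rescaled_path Z \<epsilon> T \<omega> \<in> U})))
        \<ge> - (INF \<phi>\<in>{\<phi>\<in>U. \<phi> 0 = z}. I T \<phi>)) \<and>
     (\<forall>F z. closedin (skorohod_topology T) F \<longrightarrow>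
        Lim (at_right (0::real)) (\<lambda>\<delta>. Limsup (at_right (0::real)) (\<lambda>\<epsilon>.
          SUP z'\<in>{z'\<in>E. norm (\<epsilon> *\<^sub>R z' - z) < \<delta>}.
            ereal \<epsilon> * elog (measure (P z') {\<omega>\<in>space (P z'). rescaled_path Z \<epsilon> T \<omega> \<in> F})))
        \<le> - (INF \<phi>\<in>{\<phi>\<in>F. \<phi> 0 = z}. I T \<phi>)))"

definition cadlag_process_on ::
  "'a::real_normed_vector set \<Rightarrow> ('a \<Rightarrow> 'w measure) \<Rightarrow> (real \<Rightarrow> 'w \<Rightarrow> 'a) \<Rightarrow> bool" where
  "cadlag_process_on E P Z \<longleftrightarrow> (\<forall>z\<in>E.
     prob_space (P z) \<and>
     (\<forall>t. Z t \<in> borel_measurable (P z)) \<and>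
     (AE \<omega> in P z. Z 0 \<omega> = z) \<and>
     (\<forall>\<omega>\<in>space (P z). (\<forall>t\<ge>0. Z t \<omega> \<in> E) \<and>
        (\<forall>t\<ge>0. continuous (at_right t) (\<lambda>s. Z s \<omega>)) \<and>
        (\<forall>t>0. \<exists>l. ((\<lambda>s. Z s \<omega>) \<longlongrightarrow> l) (at_left t))) \<and>
     (\<forall>T>0. \<forall>\<epsilon>>0. (\<lambda>\<omega>. rescaled_path Z \<epsilon> T \<omega>)
        \<in> measurable (P z) (borel_of_top (skorohod_topology T))))"

end

theory Submission
  imports Defs "HOL-Real_Asymp.Real_Asymp"
begin

text \<open>
  The level set \<open>{\<phi>. \<phi> 0 = q \<and> I T \<phi> \<le> A}\<close> of the good rate function is compact in the
  Skorohod topology. The sets of paths of sup-norm below \<open>k\<close> are Skorohod-open (a time change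
  does not alter the range of a path) and exhaust \<open>D([0,T])\<close>, since cadlag paths are bounded on
  \<open>[0,T]\<close>; so the level set lies in one of them, of radius \<open>R\<close>. By right-continuity, on the event
  \<open>\<tau>(nR) \<le> Tn\<close> the path \<open>Z\<^sup>\<epsilon>\<close> with \<open>\<epsilon> = 1/n\<close> reaches norm \<open>R\<close> in \<open>[0,T]\<close>, i.e. it lies in the
  closed set \<open>F\<close> of paths of sup-norm at least \<open>R\<close>, on which \<open>I > A\<close>. The LDP upper bound for
  \<open>F\<close>, read along \<open>\<epsilon> = 1/n\<close>, gives the claim.
\<close>

lemma Limsup_compose_filterlim_le:
  fixes g :: "'a \<Rightarrow> 'c::complete_lattice"
  assumes "filterlim f G F"
  shows "Limsup F (\<lambda>x. g (f x)) \<le> Limsup G g"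
proof -
  have "Limsup F (\<lambda>x. g (f x)) \<le> Limsup (filtermap f F) g"
    by (rule Limsup_filtermap_ge)
  also have "\<dots> \<le> Limsup G g"
    using assms unfolding filterlim_def Limsup_def le_filter_def
    by (intro INF_superset_mono) auto
  finally show ?thesis .
qed

lemma tendsto_Lim_at_right_mono:
  fixes f :: "real \<Rightarrow> 'b::{complete_linorder, linorder_topology}"
  assumes "\<And>a b. x < a \<Longrightarrow> a \<le> b \<Longrightarrow> f a \<le> f b"
  shows "(f \<longlongrightarrow> Lim (at_right x) f) (at_right x)"
proof -
  have lim: "(f \<longlongrightarrow> Inf (f ` {x<..})) (at_right x)"
    using Lim_right_bound[of UNIV x f bot] assms by simp
  then show ?thesis
    by (simp add: tendsto_Lim[OF trivial_limit_at_right_real lim])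
qed

lemma Lim_at_right_mono:
  fixes f g :: "real \<Rightarrow> 'b::{complete_linorder, linorder_topology}"
  assumes "\<And>a b. x < a \<Longrightarrow> a \<le> b \<Longrightarrow> f a \<le> f b"
    and "\<And>a b. x < a \<Longrightarrow> a \<le> b \<Longrightarrow> g a \<le> g b"
    and "\<And>a. x < a \<Longrightarrow> f a \<le> g a"
  shows "Lim (at_right x) f \<le> Lim (at_right x) g"
  using trivial_limit_at_right_real tendsto_Lim_at_right_mono tendsto_Lim_at_right_mono
  by (rule tendsto_le) (use assms in \<open>auto simp: eventually_at_right_field intro: exI[of _ "x + 1"]\<close>)

lemma tendsto_imp_eventually_norm_le:
  assumes "(f \<longlongrightarrow> l) F"
  shows "eventually (\<lambda>x. norm (f x) \<le> norm l + 1) F"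
proof -
  have "eventually (\<lambda>x. norm (f x) < norm l + 1) F"
    using tendsto_norm[OF assms] by (rule order_tendstoD) simp
  then show ?thesis by eventually_elim simp
qed

lemma cadlag_on_eventually_bounded:
  fixes \<phi> :: "real \<Rightarrow> 'a::real_normed_vector"
  assumes "cadlag_on T \<phi>" and "t \<in> {0..T}"
  shows "\<exists>B. eventually (\<lambda>s. s \<in> {0..T} \<longrightarrow> norm (\<phi> s) \<le> B) (at t)"
proof -
  obtain Br where right: "eventually (\<lambda>s. s \<in> {0..T} \<longrightarrow> norm (\<phi> s) \<le> Br) (at_right t)"
  proof (cases "t < T")
    case True
    then have "(\<phi> \<longlongrightarrow> \<phi> t) (at_right t)"
      using assms unfolding cadlag_on_def continuous_within by auto
    then have "eventually (\<lambda>s. norm (\<phi> s) \<le> norm (\<phi> t) + 1) (at_right t)"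
      by (rule tendsto_imp_eventually_norm_le)
    then show ?thesis by (rule that[of "norm (\<phi> t) + 1", OF eventually_mono]) simp
  next
    case False
    then have "eventually (\<lambda>s. s \<notin> {0..T}) (at_right t)"
      using assms(2) by (auto simp: eventually_at_right_field intro: exI[of _ "t + 1"])
    then show ?thesis by (rule that[of 0, OF eventually_mono]) auto
  qed
  obtain Bl where left: "eventually (\<lambda>s. s \<in> {0..T} \<longrightarrow> norm (\<phi> s) \<le> Bl) (at_left t)"
  proof (cases "0 < t")
    case True
    then obtain l where "(\<phi> \<longlongrightarrow> l) (at_left t)"
      using assms unfolding cadlag_on_def by force
    then have "eventually (\<lambda>s. norm (\<phi> s) \<le> norm l + 1) (at_left t)"
      by (rule tendsto_imp_eventually_norm_le)
    then show ?thesis by (rule that[of "norm l + 1", OF eventually_mono]) simp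
  next
    case False
    then have "eventually (\<lambda>s. s \<notin> {0..T}) (at_left t)"
      using assms(2) by (auto simp: eventually_at_left_field intro: exI[of _ "t - 1"])
    then show ?thesis by (rule that[of 0, OF eventually_mono]) auto
  qed
  have "eventually (\<lambda>s. s \<in> {0..T} \<longrightarrow> norm (\<phi> s) \<le> max Bl Br) (at_left t)"
    using left by (rule eventually_mono) auto
  moreover have "eventually (\<lambda>s. s \<in> {0..T} \<longrightarrow> norm (\<phi> s) \<le> max Bl Br) (at_right t)"
    using right by (rule eventually_mono) auto
  ultimately show ?thesis
    unfolding eventually_at_split by blast
qed

lemma compact_locally_bounded_imp_bounded:
  fixes f :: "'a::metric_space \<Rightarrow> 'b::real_normed_vector"
  assumes "compact S"
    and "\<And>x. x \<in> S \<Longrightarrow> \<exists>B. eventually (\<lambda>y. y \<in> S \<longrightarrow> norm (f y) \<le> B) (at x)"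
  shows "bounded (f ` S)"
proof -
  have "\<exists>e>0. bounded (f ` (S \<inter> ball x e))" if x: "x \<in> S" for x
  proof -
    obtain B d where "d > 0" and B: "\<And>y. y \<in> S \<Longrightarrow> y \<noteq> x \<Longrightarrow> dist y x < d \<Longrightarrow> norm (f y) \<le> B"
      using assms(2)[OF x] unfolding eventually_at by auto
    have "norm (f y) \<le> max B (norm (f x))" if "y \<in> S \<inter> ball x d" for y
      using B[of y] that by (cases "y = x") (auto simp: dist_commute)
    then have "\<forall>z\<in>f ` (S \<inter> ball x d). norm z \<le> max B (norm (f x))"
      by blast
    then show ?thesis using \<open>d > 0\<close> unfolding bounded_iff by blast
  qed
  then obtain e where e: "\<And>x. x \<in> S \<Longrightarrow> e x > 0" "\<And>x. x \<in> S \<Longrightarrow> bounded (f ` (S \<inter> ball x (e x)))"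
    by metis
  obtain D where D: "D \<subseteq> S" "finite D" "S \<subseteq> (\<Union>c\<in>D. ball c (e c))"
  proof (rule compactE_image[OF assms(1)])
    show "S \<subseteq> (\<Union>c\<in>S. ball c (e c))"
    proof
      fix x assume "x \<in> S"
      then show "x \<in> (\<Union>c\<in>S. ball c (e c))" using e(1) by (intro UN_I[of x]) auto
    qed
  qed auto
  have "f ` S \<subseteq> (\<Union>c\<in>D. f ` (S \<inter> ball c (e c)))" using D(3) by blast
  moreover have "bounded (\<Union>c\<in>D. f ` (S \<inter> ball c (e c)))" using D(1,2) e(2) by blast
  ultimately show ?thesis by (rule bounded_subset[rotated])
qed

lemma Dsp_bounded:
  assumes "\<phi> \<in> Dsp T"
  shows "bounded (\<phi> ` {0..T})"
proof (rule compact_locally_bounded_imp_bounded)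
  show "\<exists>B. eventually (\<lambda>s. s \<in> {0..T} \<longrightarrow> norm (\<phi> s) \<le> B) (at t)" if "t \<in> {0..T}" for t
    using assms that unfolding Dsp_def by (blast intro: cadlag_on_eventually_bounded)
qed simp

lemma openin_skorohod_topology: "openin (skorohod_topology T) U \<longleftrightarrow> sk_open T U"
  unfolding skorohod_topology_def by (simp add: istopology_sk_open)

lemma topspace_skorohod_topology: "topspace (skorohod_topology T) = Dsp T"
proof -
  have "sk_open T (Dsp T)" unfolding sk_open_def by (auto intro: exI[of _ 1])
  moreover have "U \<subseteq> Dsp T" if "sk_open T U" for U using that unfolding sk_open_def by blast
  ultimately show ?thesis unfolding topspace_def openin_skorohod_topology by blast
qed

lemma time_change_range:
  assumes "r \<in> time_changes T" "t \<in> {0..T}"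
  shows "r t \<in> {0..T}"
proof -
  have r: "strict_mono_on {0..T} r" "r 0 = 0" "r T = T"
    using assms(1) unfolding time_changes_def by auto
  have "r 0 \<le> r t" "r t \<le> r T"
    using assms(2) by (auto intro!: strict_mono_on_leD[OF r(1)])
  then show ?thesis using r by auto
qed

lemma time_change_surj:
  assumes "r \<in> time_changes T" "u \<in> {0..T}"
  obtains t where "t \<in> {0..T}" "r t = u"
proof -
  have r: "continuous_on {0..T} r" "r 0 = 0" "r T = T"
    using assms(1) unfolding time_changes_def by auto
  then show ?thesis using IVT'[of r 0 u T] assms(2) that by auto
qed

lemma id_in_time_changes: "id \<in> time_changes T"
  unfolding time_changes_def by (auto simp: strict_mono_on_def)

lemma sk_dist_less_imp_time_change:
  assumes "\<phi> \<in> Dsp T" "\<psi> \<in> Dsp T" "sk_dist T \<phi> \<psi> < e"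
  obtains r s where "r \<in> time_changes T" "s < e"
    "\<And>t. t \<in> {0..T} \<Longrightarrow> norm (\<phi> t - \<psi> (r t)) \<le> s"
proof -
  \<comment> \<open>\<open>Sup\<close> on \<open>real\<close> only bounds the deviation because cadlag paths are bounded.\<close>
  define dev where "dev r = Sup ((\<lambda>t. norm (\<phi> t - \<psi> (r t))) ` {0..T})" for r
  have "Inf ((\<lambda>r. max (Sup ((\<lambda>t. \<bar>r t - t\<bar>) ` {0..T})) (dev r)) ` time_changes T) < e"
    using assms(3) unfolding sk_dist_def dev_def .
  then obtain r where r: "r \<in> time_changes T"
    and "max (Sup ((\<lambda>t. \<bar>r t - t\<bar>) ` {0..T})) (dev r) < e"
    using id_in_time_changes by (auto dest!: cInf_lessD[rotated])
  then have "dev r < e" by simp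
  moreover have "norm (\<phi> t - \<psi> (r t)) \<le> dev r" if t: "t \<in> {0..T}" for t
  proof -
    obtain a b where "\<forall>t\<in>{0..T}. norm (\<phi> t) \<le> a" "\<forall>u\<in>{0..T}. norm (\<psi> u) \<le> b"
      using Dsp_bounded[OF assms(1)] Dsp_bounded[OF assms(2)] unfolding bounded_iff by blast
    then have "bdd_above ((\<lambda>t. norm (\<phi> t - \<psi> (r t))) ` {0..T})"
      using time_change_range[OF r]
      by (intro bdd_aboveI2[of _ _ "a + b"]) (smt (verit) norm_triangle_ineq4)
    then show ?thesis unfolding dev_def using t by (intro cSup_upper) auto
  qed
  ultimately show ?thesis using that r by blast
qed

definition norm_bounded_paths :: "real \<Rightarrow> real \<Rightarrow> (real \<Rightarrow> 'a::real_normed_vector) set" where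
  "norm_bounded_paths T M = {\<phi>\<in>Dsp T. \<exists>m<M. \<forall>t\<in>{0..T}. norm (\<phi> t) \<le> m}"

lemma norm_bounded_paths_mono: "M \<le> M' \<Longrightarrow> norm_bounded_paths T M \<subseteq> norm_bounded_paths T M'"
  unfolding norm_bounded_paths_def by force

lemma openin_norm_bounded_paths: "openin (skorohod_topology T) (norm_bounded_paths T M)"
  unfolding openin_skorohod_topology sk_open_def
proof (intro conjI ballI)
  show "norm_bounded_paths T M \<subseteq> Dsp T" unfolding norm_bounded_paths_def by auto
next
  fix \<phi> assume "\<phi> \<in> norm_bounded_paths T M"
  then obtain m where \<phi>: "\<phi> \<in> Dsp T" "m < M" "\<forall>t\<in>{0..T}. norm (\<phi> t) \<le> m"
    unfolding norm_bounded_paths_def by blast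
  have "\<psi> \<in> norm_bounded_paths T M" if \<psi>: "\<psi> \<in> Dsp T" "sk_dist T \<phi> \<psi> < M - m" for \<psi>
  proof -
    obtain r s where r: "r \<in> time_changes T" "s < M - m"
      and close: "\<And>t. t \<in> {0..T} \<Longrightarrow> norm (\<phi> t - \<psi> (r t)) \<le> s"
      using sk_dist_less_imp_time_change[OF \<phi>(1) \<psi>] by blast
    have "norm (\<psi> u) \<le> m + s" if "u \<in> {0..T}" for u
    proof -
      obtain t where t: "t \<in> {0..T}" "r t = u" using time_change_surj[OF r(1) \<open>u \<in> {0..T}\<close>] .
      have "norm (\<psi> (r t)) \<le> norm (\<phi> t) + norm (\<phi> t - \<psi> (r t))"
        using norm_triangle_ineq2[of "\<psi> (r t)" "\<phi> t"] by (simp add: norm_minus_commute)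
      then show ?thesis using \<phi>(3) close t by force
    qed
    then show ?thesis unfolding norm_bounded_paths_def using \<psi>(1) r(2) by force
  qed
  then show "\<exists>e>0. \<forall>\<psi>\<in>Dsp T. sk_dist T \<phi> \<psi> < e \<longrightarrow> \<psi> \<in> norm_bounded_paths T M"
    using \<phi>(2) by (intro exI[of _ "M - m"]) auto
qed

lemma closedin_Dsp_diff_norm_bounded_paths:
  "closedin (skorohod_topology T) (Dsp T - norm_bounded_paths T M)"
  by (metis closedin_diff closedin_topspace openin_norm_bounded_paths topspace_skorohod_topology)

lemma compactin_subset_norm_bounded_paths:
  assumes "compactin (skorohod_topology T) K"
  obtains R where "R > 0" "K \<subseteq> norm_bounded_paths T R"
proof -
  have "K \<subseteq> (\<Union>k::nat. norm_bounded_paths T (real k))"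
  proof
    fix \<phi> assume "\<phi> \<in> K"
    then have \<phi>: "\<phi> \<in> Dsp T"
      using compactin_subset_topspace[OF assms] topspace_skorohod_topology by blast
    then obtain B where "\<forall>t\<in>{0..T}. norm (\<phi> t) \<le> B"
      using Dsp_bounded unfolding bounded_iff by blast
    moreover obtain k :: nat where "B < real k" using reals_Archimedean2 by blast
    ultimately show "\<phi> \<in> (\<Union>k. norm_bounded_paths T (real k))"
      unfolding norm_bounded_paths_def using \<phi> by blast
  qed
  then obtain N where N: "finite N" "K \<subseteq> (\<Union>k\<in>N. norm_bounded_paths T (real k))"
    using assms openin_norm_bounded_paths unfolding compactin_def
    by (smt (verit) finite_subset_image image_iff subset_UNIV)
  define R where "R = real (Max (insert 0 N)) + 1"
  have "norm_bounded_paths T (real k) \<subseteq> norm_bounded_paths T R" if "k \<in> N" for k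
  proof (rule norm_bounded_paths_mono)
    have "real k \<le> real (Max (insert 0 N))" using that N(1) by simp
    then show "real k \<le> R" unfolding R_def by linarith
  qed
  then show ?thesis using that[of R] N(2) unfolding R_def by force
qed

lemma space_borel_of_top: "space (borel_of_top X) = topspace X"
  unfolding borel_of_top_def by (simp add: space_measure_of_conv)

lemma closedin_sets_borel_of_top:
  assumes "closedin X F"
  shows "F \<in> sets (borel_of_top X)"
proof -
  have opens: "{U. openin X U} \<subseteq> Pow (topspace X)" by (auto dest: openin_subset)
  have "topspace X - (topspace X - F) \<in> sigma_sets (topspace X) {U. openin X U}"
    using assms by (intro sigma_sets.Compl sigma_sets.Basic) (auto simp: closedin_def)
  then show ?thesis
    using closedin_subset[OF assms] unfolding borel_of_top_def sets_measure_of[OF opens]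
    by (simp add: double_diff)
qed

lemma exit_time_attained:
  fixes Z :: "real \<Rightarrow> 'w \<Rightarrow> 'a::real_normed_vector"
  assumes right_cont: "\<And>t. t \<ge> 0 \<Longrightarrow> continuous (at_right t) (\<lambda>s. Z s \<omega>)"
    and "exit_time Z R \<omega> \<le> ereal X"
  obtains t where "0 \<le> t" "t \<le> X" "R \<le> norm (Z t \<omega>)"
proof -
  define S where "S = {ereal t | t. t \<ge> 0 \<and> R \<le> norm (Z t \<omega>)}"
  have "0 \<le> Inf S" unfolding S_def by (rule Inf_greatest) auto
  moreover have "Inf S \<le> ereal X" using assms(2) unfolding exit_time_def S_def .
  ultimately obtain \<tau> where \<tau>: "Inf S = ereal \<tau>" "0 \<le> \<tau>" "\<tau> \<le> X" by (cases "Inf S") auto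
  have "R \<le> norm (Z \<tau> \<omega>)"
  proof (rule ccontr)
    assume not_exited: "\<not> R \<le> norm (Z \<tau> \<omega>)"
    have "((\<lambda>s. norm (Z s \<omega>)) \<longlongrightarrow> norm (Z \<tau> \<omega>)) (at_right \<tau>)"
      using right_cont[OF \<tau>(2)] unfolding continuous_within by (rule tendsto_norm)
    then have "eventually (\<lambda>s. norm (Z s \<omega>) < R) (at_right \<tau>)"
      using not_exited by (intro order_tendstoD(2)) auto
    then obtain b where "\<tau> < b" and below: "\<And>s. \<tau> < s \<Longrightarrow> s < b \<Longrightarrow> norm (Z s \<omega>) < R"
      unfolding eventually_at_right_field by blast
    have "ereal b \<le> Inf S"
    proof (rule Inf_greatest)
      fix x assume "x \<in> S"
      then obtain t where t: "x = ereal t" "R \<le> norm (Z t \<omega>)" unfolding S_def by blast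
      have "\<tau> \<le> t" using Inf_lower[OF \<open>x \<in> S\<close>] \<tau>(1) t(1) by simp
      moreover have "t \<noteq> \<tau>" using t(2) not_exited by blast
      moreover have "\<not> (\<tau> < t \<and> t < b)" using below t(2) by force
      ultimately show "ereal b \<le> x" using t(1) by auto
    qed
    then show False using \<tau>(1) \<open>\<tau> < b\<close> by simp
  qed
  then show ?thesis using \<tau> that by blast
qed

lemma exit_before_imp_rescaled_path_unbounded:
  assumes "\<And>t. t \<ge> 0 \<Longrightarrow> continuous (at_right t) (\<lambda>s. Z s \<omega>)"
    and "c > 0" and "exit_time Z (c * R) \<omega> \<le> ereal (T * c)"
  shows "rescaled_path Z (1 / c) T \<omega> \<notin> norm_bounded_paths T R"
proof
  assume "rescaled_path Z (1 / c) T \<omega> \<in> norm_bounded_paths T R"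
  then obtain m where "m < R" and m: "\<forall>t\<in>{0..T}. norm (rescaled_path Z (1 / c) T \<omega> t) \<le> m"
    unfolding norm_bounded_paths_def by blast
  obtain t where t: "0 \<le> t" "t \<le> T * c" "c * R \<le> norm (Z t \<omega>)"
    using exit_time_attained[OF assms(1,3)] .
  have t_rescaled: "t / c \<in> {0..T}" using t \<open>c > 0\<close> by (auto simp: divide_le_eq)
  then have "rescaled_path Z (1 / c) T \<omega> (t / c) = (1 / c) *\<^sub>R Z t \<omega>"
    using \<open>c > 0\<close> unfolding rescaled_path_def clamp_def by simp
  then have "R \<le> norm (rescaled_path Z (1 / c) T \<omega> (t / c))"
    using t(3) \<open>c > 0\<close> by (simp add: le_divide_eq mult.commute)
  then show False using m t_rescaled \<open>m < R\<close> by force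
qed

lemma exit_probability_le_rescaled_probability:
  assumes "cadlag_process_on E P Z" "z \<in> E" "T > 0" "c > 0"
  shows "measure (P z) {\<omega>\<in>space (P z). exit_time Z (c * R) \<omega> \<le> ereal (T * c)}
    \<le> measure (P z) {\<omega>\<in>space (P z). rescaled_path Z (1 / c) T \<omega> \<in> Dsp T - norm_bounded_paths T R}"
proof -
  have prob: "prob_space (P z)"
    and right_cont: "\<And>\<omega> t. \<omega> \<in> space (P z) \<Longrightarrow> t \<ge> 0 \<Longrightarrow> continuous (at_right t) (\<lambda>s. Z s \<omega>)"
    and meas: "(\<lambda>\<omega>. rescaled_path Z (1 / c) T \<omega>) \<in> measurable (P z) (borel_of_top (skorohod_topology T))"
    using assms unfolding cadlag_process_on_def by auto
  have "(\<lambda>\<omega>. rescaled_path Z (1 / c) T \<omega>) -` (Dsp T - norm_bounded_paths T R) \<inter> space (P z) \<in> sets (P z)"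
    by (intro measurable_sets[OF meas] closedin_sets_borel_of_top closedin_Dsp_diff_norm_bounded_paths)
  moreover have "{\<omega>\<in>space (P z). exit_time Z (c * R) \<omega> \<le> ereal (T * c)}
      \<subseteq> {\<omega>\<in>space (P z). rescaled_path Z (1 / c) T \<omega> \<in> Dsp T - norm_bounded_paths T R}"
  proof (intro subsetI CollectI conjI; elim CollectE conjE)
    fix \<omega> assume \<omega>: "\<omega> \<in> space (P z)" and exit: "exit_time Z (c * R) \<omega> \<le> ereal (T * c)"
    show "\<omega> \<in> space (P z)" by fact
    show "rescaled_path Z (1 / c) T \<omega> \<in> Dsp T - norm_bounded_paths T R"
      using measurable_space[OF meas \<omega>]
        exit_before_imp_rescaled_path_unbounded[OF right_cont[OF \<omega>] \<open>c > 0\<close> exit]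
      by (simp add: space_borel_of_top topspace_skorohod_topology)
  qed
  ultimately show ?thesis
    by (intro finite_measure.finite_measure_mono[OF prob_space.axioms(1)[OF prob]]) (auto simp: vimage_def Int_def conj_commute)
qed

lemma norm_scaleR_inverse_diff_less_iff:
  fixes z q :: "'a::real_normed_vector"
  assumes "c > 0"
  shows "norm ((1 / c) *\<^sub>R z - q) < \<delta> \<longleftrightarrow> norm (c *\<^sub>R q - z) < \<delta> * c"
proof -
  have "(1 / c) *\<^sub>R z - q = (1 / c) *\<^sub>R (z - c *\<^sub>R q)" using assms by (simp add: algebra_simps)
  then have "norm ((1 / c) *\<^sub>R z - q) = norm (c *\<^sub>R q - z) / c"
    using assms by (simp add: norm_minus_commute)
  then show ?thesis using assms by (simp add: divide_less_eq)
qed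

lemma elog_mono: "p \<le> p' \<Longrightarrow> elog p \<le> elog p'"
  unfolding elog_def by auto

definition exit_time_rate ::
  "'a::real_normed_vector set \<Rightarrow> ('a \<Rightarrow> 'w measure) \<Rightarrow> (real \<Rightarrow> 'w \<Rightarrow> 'a)
    \<Rightarrow> real \<Rightarrow> real \<Rightarrow> 'a \<Rightarrow> real \<Rightarrow> ereal" where
  "exit_time_rate E P Z T R q \<delta> = limsup (\<lambda>n::nat.
     SUP z\<in>{z\<in>E. norm (real n *\<^sub>R q - z) < \<delta> * real n}.
       ereal (1 / real n) *
       elog (measure (P z) {\<omega>\<in>space (P z). exit_time Z (real n * R) \<omega> \<le> ereal (T * real n)}))"

definition path_ldp_rate ::
  "'a::real_normed_vector set \<Rightarrow> ('a \<Rightarrow> 'w measure) \<Rightarrow> (real \<Rightarrow> 'w \<Rightarrow> 'a)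
    \<Rightarrow> real \<Rightarrow> (real \<Rightarrow> 'a) set \<Rightarrow> 'a \<Rightarrow> real \<Rightarrow> ereal" where
  "path_ldp_rate E P Z T F z \<delta> = Limsup (at_right 0) (\<lambda>\<epsilon>.
     SUP z'\<in>{z'\<in>E. norm (\<epsilon> *\<^sub>R z' - z) < \<delta>}.
       ereal \<epsilon> * elog (measure (P z') {\<omega>\<in>space (P z'). rescaled_path Z \<epsilon> T \<omega> \<in> F}))"

lemma H1'_upper_bound:
  assumes "H1' E P Z I" "T > 0" "closedin (skorohod_topology T) F"
  shows "Lim (at_right 0) (path_ldp_rate E P Z T F z) \<le> - (INF \<phi>\<in>{\<phi>\<in>F. \<phi> 0 = z}. I T \<phi>)"
  using assms unfolding H1'_def path_ldp_rate_def[abs_def] by blast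

lemma exit_time_rate_mono:
  assumes "0 \<le> a" "a \<le> b"
  shows "exit_time_rate E P Z T R q a \<le> exit_time_rate E P Z T R q b"
proof -
  have "a * real n \<le> b * real n" for n using assms by (intro mult_right_mono) auto
  then show ?thesis unfolding exit_time_rate_def
    by (intro Limsup_mono always_eventually allI SUP_subset_mono) (auto intro: less_le_trans)
qed

lemma path_ldp_rate_mono:
  "a \<le> b \<Longrightarrow> path_ldp_rate E P Z T F z a \<le> path_ldp_rate E P Z T F z b"
  unfolding path_ldp_rate_def by (intro Limsup_mono always_eventually allI SUP_subset_mono) auto

lemma exit_time_rate_le_path_ldp_rate:
  assumes "cadlag_process_on E P Z" "T > 0"
  shows "exit_time_rate E P Z T R q \<delta> \<le> path_ldp_rate E P Z T (Dsp T - norm_bounded_paths T R) q \<delta>"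
proof -
  define G where "G \<epsilon> = (SUP z\<in>{z\<in>E. norm (\<epsilon> *\<^sub>R z - q) < \<delta>}. ereal \<epsilon> *
      elog (measure (P z) {\<omega>\<in>space (P z). rescaled_path Z \<epsilon> T \<omega> \<in> Dsp T - norm_bounded_paths T R}))"
    for \<epsilon>
  have "exit_time_rate E P Z T R q \<delta> \<le> limsup (\<lambda>n::nat. G (1 / real n))"
    unfolding exit_time_rate_def
  proof (intro Limsup_mono eventually_sequentiallyI[of 1])
    fix n :: nat assume "1 \<le> n"
    then have n: "real n > 0" by simp
    show "(SUP z\<in>{z\<in>E. norm (real n *\<^sub>R q - z) < \<delta> * real n}. ereal (1 / real n) *
            elog (measure (P z) {\<omega>\<in>space (P z). exit_time Z (real n * R) \<omega> \<le> ereal (T * real n)}))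
          \<le> G (1 / real n)"
      unfolding G_def norm_scaleR_inverse_diff_less_iff[OF n]
      using exit_probability_le_rescaled_probability[OF assms(1) _ assms(2) n] n
      by (intro SUP_mono) (auto intro!: ereal_mult_left_mono elog_mono)
  qed
  also have "\<dots> \<le> Limsup (at_right 0) G"
    by (rule Limsup_compose_filterlim_le) real_asymp
  finally show ?thesis unfolding path_ldp_rate_def G_def .
qed

theorem mainTheorem10:
  fixes E :: "(real^'d) set"
    and P :: "real^'d \<Rightarrow> 'w measure"
    and Z :: "real \<Rightarrow> 'w \<Rightarrow> real^'d"
    and I :: "real \<Rightarrow> (real \<Rightarrow> real^'d) \<Rightarrow> ereal"
    and T A :: real and q :: "real^'d"
  assumes "\<not> bounded E"
    and "cadlag_process_on E P Z"
    and "H1' E P Z I"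
    and "T > 0" and "A > 0"
  shows "\<exists>R>0. Lim (at_right (0::real)) (\<lambda>\<delta>. limsup (\<lambda>n::nat.
            SUP z\<in>{z\<in>E. norm (real n *\<^sub>R q - z) < \<delta> * real n}.
              ereal (1 / real n) *
              elog (measure (P z) {\<omega>\<in>space (P z). exit_time Z (real n * R) \<omega> \<le> ereal (T * real n)})))
         \<le> ereal (- A)"
proof -
  have "good_rate_function T (I T)" using assms(3,4) unfolding H1'_def by blast
  then have "compactin (skorohod_topology T) {\<phi>\<in>Dsp T. \<phi> 0 \<in> {q} \<and> I T \<phi> \<le> ereal A}"
    using compact_sing[of q] less_imp_le[OF \<open>A > 0\<close>] unfolding good_rate_function_def by blast
  then obtain R where "R > 0"
    and level_set: "{\<phi>\<in>Dsp T. \<phi> 0 \<in> {q} \<and> I T \<phi> \<le> ereal A} \<subseteq> norm_bounded_paths T R"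
    by (rule compactin_subset_norm_bounded_paths)
  define F :: "(real \<Rightarrow> real^'d) set" where "F = Dsp T - norm_bounded_paths T R"
  have "Lim (at_right 0) (exit_time_rate E P Z T R q) \<le> Lim (at_right 0) (path_ldp_rate E P Z T F q)"
    unfolding F_def using assms(2,4)
    by (intro Lim_at_right_mono exit_time_rate_mono path_ldp_rate_mono exit_time_rate_le_path_ldp_rate) auto
  also have "\<dots> \<le> - (INF \<phi>\<in>{\<phi>\<in>F. \<phi> 0 = q}. I T \<phi>)"
    using assms(3,4) closedin_Dsp_diff_norm_bounded_paths unfolding F_def by (rule H1'_upper_bound)
  also have "\<dots> \<le> ereal (- A)"
    using level_set unfolding F_def by (force intro: INF_greatest simp: ereal_uminus_le_reorder)
  finally show ?thesis
    using \<open>R > 0\<close> unfolding exit_time_rate_def[abs_def] by blast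
qed

end
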